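(* Let $p$ be an odd prime, $x\in\mathbb Z_p$ and $x\not\equiv0\pmod p$. Then $$\sum_{k=0}^{\frac{p-1}2}\frac{\binom{2k}k^2}{16^k}\Big(x^k-\Big(\frac xp\Big)x^{-k}\Big)\equiv0\pmod p.$$
   Context: $\mathbb Z_p$ denotes the set of rational numbers whose denominator (in lowest terms) is prime to $p$; congruences are in this ring. For $a\in\mathbb Z_p$, $\big(\frac ap\big)$ is the Legendre symbol of the residue of $a$ modulo $p$. *)

theory Defs
  imports "HOL-Number_Theory.Number_Theory"
begin

text \<open>The ring Z_p: rationals whose reduced denominator is prime to p.\<close>
definition p_integral :: "int \<Rightarrow> rat \<Rightarrow> bool" where
  "p_integral p q \<longleftrightarrow> coprime (snd (quotient_of q)) p"

definition rat_cong :: "rat \<Rightarrow> rat \<Rightarrow> int \<Rightarrow> bool" where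
  "rat_cong a b p \<longleftrightarrow> p_integral p a \<and> p_integral p b \<and> p_integral p ((a - b) / of_int p)"

definition rat_residue :: "int \<Rightarrow> rat \<Rightarrow> int" where
  "rat_residue p x = (THE r. 0 \<le> r \<and> r < p \<and> rat_cong x (of_int r) p)"

end

theory Submission
  imports Defs
begin

text \<open>
  Put \<open>n = (p - 1)/2\<close>. Since \<open>n \<equiv> -1/2 (mod p)\<close>, one has
  \<open>binomial (2k) k \<equiv> (-4)^k binomial n k (mod p)\<close>, so the coefficients
  \<open>binomial (2k) k^2 / 16^k\<close> reduce to \<open>binomial n k^2\<close>. With
  \<open>T = \<Sum>k\<le>n. binomial n k^2 x^k\<close>, the symmetry of the binomial coefficients gives
  \<open>\<Sum>k\<le>n. binomial n k^2 x^-k = x^-n T\<close>, and by Euler's criterion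
  \<open>(x/p) \<equiv> x^n\<close>. Hence the sum is congruent to \<open>T - x^n x^-n T = 0\<close>.
\<close>

lemma p_integral_iff_fraction:
  "p_integral p q \<longleftrightarrow> (\<exists>a b. b > 0 \<and> coprime b p \<and> q = of_int a / of_int b)"
proof -
  obtain n d where nd: "quotient_of q = (n, d)" by (cases "quotient_of q") auto
  show ?thesis
  proof
    assume "p_integral p q"
    then show "\<exists>a b. b > 0 \<and> coprime b p \<and> q = of_int a / of_int b"
      using nd quotient_of_div[OF nd] quotient_of_denom_pos[OF nd]
      unfolding p_integral_def by auto
  next
    assume "\<exists>a b. b > 0 \<and> coprime b p \<and> q = of_int a / of_int b"
    then obtain a b where ab: "b > 0" "coprime b p" "q = of_int a / of_int b" by blast
    have "of_int a / of_int b = (of_int n / of_int d :: rat)"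
      using ab quotient_of_div[OF nd] by simp
    then have "a * d = n * b"
      using quotient_of_denom_pos[OF nd] ab(1) by (simp add: field_simps flip: of_int_mult)
    then have "d dvd n * b" by (metis dvd_triv_right)
    then have "d dvd b"
      using quotient_of_coprime[OF nd] by (metis coprime_commute coprime_dvd_mult_right_iff)
    then show "p_integral p q"
      using ab(2) unfolding p_integral_def nd by (auto intro: coprime_imp_coprime dvd_trans)
  qed
qed

lemma p_integral_of_int_divide:
  assumes "coprime b p"
  shows "p_integral p (of_int a / of_int b)"
proof (cases "b = 0")
  case True
  then show ?thesis
    unfolding p_integral_iff_fraction by (intro exI[of _ 0] exI[of _ 1]) simp
next
  case False
  then have "of_int a / of_int b = (of_int (a * sgn b) / of_int \<bar>b\<bar> :: rat)"
    by (cases "b > 0") auto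
  moreover have "\<bar>b\<bar> > 0" "coprime \<bar>b\<bar> p" using False assms by auto
  ultimately show ?thesis unfolding p_integral_iff_fraction by blast
qed

lemma p_integral_of_int: "p_integral p (of_int m)"
  using p_integral_of_int_divide[of 1 p m] by simp

lemma p_integral_0: "p_integral p 0"
  using p_integral_of_int[of p 0] by simp

lemma p_integral_1: "p_integral p 1"
  using p_integral_of_int[of p 1] by simp

lemma p_integral_of_nat: "p_integral p (of_nat m)"
  using p_integral_of_int[of p "int m"] by simp

lemma p_integral_add:
  assumes "p_integral p x" and "p_integral p y"
  shows "p_integral p (x + y)"
proof -
  obtain a b c d where h: "b > 0" "coprime b p" "x = of_int a / of_int b"
    "d > 0" "coprime d p" "y = of_int c / of_int d"
    using assms unfolding p_integral_iff_fraction by blast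
  then have "x + y = of_int (a * d + c * b) / of_int (b * d)" by (simp add: field_simps)
  moreover have "coprime (b * d) p" using h by simp
  ultimately show ?thesis by (simp only: p_integral_of_int_divide)
qed

lemma p_integral_mult:
  assumes "p_integral p x" and "p_integral p y"
  shows "p_integral p (x * y)"
proof -
  obtain a b c d where h: "b > 0" "coprime b p" "x = of_int a / of_int b"
    "d > 0" "coprime d p" "y = of_int c / of_int d"
    using assms unfolding p_integral_iff_fraction by blast
  then have "x * y = of_int (a * c) / of_int (b * d)" by simp
  moreover have "coprime (b * d) p" using h by simp
  ultimately show ?thesis by (simp only: p_integral_of_int_divide)
qed

lemma p_integral_diff:
  assumes "p_integral p x" and "p_integral p y"
  shows "p_integral p (x - y)"
  using p_integral_add[OF assms(1) p_integral_mult[OF p_integral_of_int[of p "-1"] assms(2)]]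
  by simp

lemma p_integral_power: "p_integral p x \<Longrightarrow> p_integral p (x ^ n)"
  using p_integral_1 by (induction n) (auto intro: p_integral_mult)

lemma p_integral_sum: "(\<And>k. k \<in> A \<Longrightarrow> p_integral p (f k)) \<Longrightarrow> p_integral p (sum f A)"
  using p_integral_0 by (induction A rule: infinite_finite_induct) (auto intro: p_integral_add)

definition p_divisible :: "int \<Rightarrow> rat \<Rightarrow> bool" where
  "p_divisible p q \<longleftrightarrow> p_integral p (q / of_int p)"

lemma rat_cong_iff_p_divisible:
  "rat_cong a b p \<longleftrightarrow> p_integral p a \<and> p_integral p b \<and> p_divisible p (a - b)"
  unfolding rat_cong_def p_divisible_def ..

lemma p_divisible_add: "p_divisible p x \<Longrightarrow> p_divisible p y \<Longrightarrow> p_divisible p (x + y)"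
  unfolding p_divisible_def by (simp add: add_divide_distrib p_integral_add)

lemma p_divisible_mult: "p_integral p x \<Longrightarrow> p_divisible p y \<Longrightarrow> p_divisible p (x * y)"
  unfolding p_divisible_def by (simp add: times_divide_eq_right[symmetric] p_integral_mult
      del: times_divide_eq_right)

lemma p_divisible_of_int_iff:
  assumes "prime p"
  shows "p_divisible p (of_int m) \<longleftrightarrow> p dvd m"
proof
  assume "p_divisible p (of_int m)"
  then obtain a b where h: "b > 0" "coprime b p" "of_int m / of_int p = (of_int a / of_int b :: rat)"
    unfolding p_divisible_def p_integral_iff_fraction by blast
  have "p \<noteq> 0" using assms by auto
  then have "m * b = p * a" using h(1,3) by (simp add: field_simps flip: of_int_mult)
  then have "p dvd m * b" by (metis dvd_triv_left)
  then show "p dvd m" using h(2) by (metis coprime_commute coprime_dvd_mult_left_iff)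
next
  assume "p dvd m"
  then show "p_divisible p (of_int m)"
    using assms unfolding p_divisible_def by (auto elim!: dvdE simp: p_integral_of_int)
qed

lemma p_integral_inverse:
  assumes "prime p" and "p_integral p x" and "\<not> p_divisible p x"
  shows "p_integral p (inverse x)"
proof -
  obtain a b where h: "b > 0" "coprime b p" "x = of_int a / of_int b"
    using assms(2) unfolding p_integral_iff_fraction by blast
  have "\<not> p dvd a"
  proof
    assume "p dvd a"
    then obtain c where "a = p * c" by blast
    then have "x / of_int p = of_int c / of_int b" using h(3) assms(1) by auto
    then show False using assms(3) h(2) by (simp add: p_divisible_def p_integral_of_int_divide)
  qed
  then have "coprime a p" using assms(1) by (metis coprime_commute prime_imp_coprime)
  moreover have "inverse x = of_int b / of_int a" using h(3) by simp
  ultimately show ?thesis by (simp add: p_integral_of_int_divide)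
qed

lemma rat_cong_0_iff: "rat_cong x 0 p \<longleftrightarrow> p_integral p x \<and> p_divisible p x"
  by (simp add: rat_cong_iff_p_divisible p_integral_0)

lemma rat_cong_refl: "p_integral p a \<Longrightarrow> rat_cong a a p"
  by (simp add: rat_cong_iff_p_divisible p_divisible_def p_integral_0)

lemma rat_cong_sym: "rat_cong a b p \<Longrightarrow> rat_cong b a p"
  using p_divisible_mult[OF p_integral_of_int[of p "-1"], of "a - b"]
  by (simp add: rat_cong_iff_p_divisible)

lemma rat_cong_trans [trans]: "rat_cong a b p \<Longrightarrow> rat_cong b c p \<Longrightarrow> rat_cong a c p"
  using p_divisible_add[of p "a - b" "b - c"] by (simp add: rat_cong_iff_p_divisible)

lemma rat_cong_add:
  "rat_cong a b p \<Longrightarrow> rat_cong c d p \<Longrightarrow> rat_cong (a + c) (b + d) p"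
  using p_divisible_add[of p "a - b" "c - d"]
  by (simp add: rat_cong_iff_p_divisible p_integral_add algebra_simps)

lemma rat_cong_mult:
  assumes "rat_cong a b p" and "rat_cong c d p"
  shows "rat_cong (a * c) (b * d) p"
proof -
  have "a * c - b * d = a * (c - d) + d * (a - b)" by (simp add: algebra_simps)
  then show ?thesis using assms
    by (simp add: rat_cong_iff_p_divisible p_integral_mult p_divisible_add p_divisible_mult)
qed

lemma rat_cong_diff:
  assumes "rat_cong a b p" and "rat_cong c d p"
  shows "rat_cong (a - c) (b - d) p"
  using rat_cong_add[OF assms(1) rat_cong_mult[OF rat_cong_refl[OF p_integral_of_int[of p "-1"]] assms(2)]]
  by simp

lemma rat_cong_power: "rat_cong a b p \<Longrightarrow> rat_cong (a ^ n) (b ^ n) p"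
  using rat_cong_refl[OF p_integral_1] by (induction n) (auto intro: rat_cong_mult)

lemma rat_cong_sum:
  "(\<And>k. k \<in> A \<Longrightarrow> rat_cong (f k) (g k) p) \<Longrightarrow> rat_cong (sum f A) (sum g A) p"
  using rat_cong_refl[OF p_integral_0]
  by (induction A rule: infinite_finite_induct) (auto intro: rat_cong_add)

lemma rat_cong_of_int_divide:
  assumes "[u = v] (mod p)" and "coprime d p"
  shows "rat_cong (of_int u / of_int d) (of_int v / of_int d) p"
proof -
  obtain c where c: "u - v = p * c" using assms(1) by (auto simp: cong_iff_dvd_diff)
  have "(of_int u / of_int d - of_int v / of_int d) / of_int p = (of_int c / of_int d :: rat)"
    if "p \<noteq> 0"
    using that by (simp add: c diff_divide_distrib[symmetric] flip: of_int_diff)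
  then have "p_divisible p (of_int u / of_int d - of_int v / of_int d)"
    using assms(2) p_integral_0 unfolding p_divisible_def
    by (cases "p = 0") (auto simp: p_integral_of_int_divide)
  then show ?thesis
    using assms(2) by (simp add: rat_cong_iff_p_divisible p_integral_of_int_divide)
qed

lemma rat_cong_of_int: "[u = v] (mod p) \<Longrightarrow> rat_cong (of_int u) (of_int v) p"
  using rat_cong_of_int_divide[of u v p 1] by simp

lemma rat_cong_int_residue:
  assumes "p > 0" and "p_integral p x"
  obtains r where "0 \<le> r" "r < p" "rat_cong x (of_int r) p"
proof -
  obtain a b where h: "b > 0" "coprime b p" "x = of_int a / of_int b"
    using assms(2) unfolding p_integral_iff_fraction by blast
  obtain b' where b': "[b * b' = 1] (mod p)" using cong_solve_coprime_int[OF h(2)] by blast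
  define r where "r = (a * b') mod p"
  have "[r * b = a * (b * b')] (mod p)"
    unfolding r_def by (metis cong_mod_left cong_refl cong_scalar_right mult.assoc mult.commute)
  also have "[a * (b * b') = a * 1] (mod p)" using b' by (intro cong_mult cong_refl)
  finally have "rat_cong (of_int (r * b) / of_int b) (of_int a / of_int b) p"
    using h(2) by (simp only: mult_1_right rat_cong_of_int_divide)
  moreover have "of_int (r * b) / of_int b = (of_int r :: rat)" using h(1) by simp
  ultimately have "rat_cong (of_int r) x p" using h(3) by simp
  moreover have "0 \<le> r" "r < p" using assms(1) unfolding r_def by auto
  ultimately show ?thesis using that rat_cong_sym by blast
qed

lemma rat_cong_rat_residue:
  assumes "prime p" and "p_integral p x"
  shows "rat_cong x (of_int (rat_residue p x)) p"
proof -
  have p0: "p > 0" using assms(1) prime_gt_0_int by blast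
  obtain r where r: "0 \<le> r" "r < p" "rat_cong x (of_int r) p"
    using rat_cong_int_residue[OF p0 assms(2)] .
  have "\<exists>!s. 0 \<le> s \<and> s < p \<and> rat_cong x (of_int s) p"
  proof (rule ex1I[of _ r])
    fix s assume s: "0 \<le> s \<and> s < p \<and> rat_cong x (of_int s) p"
    then have "p_divisible p (of_int (s - r))"
      using rat_cong_trans[OF rat_cong_sym r(3)] by (simp add: rat_cong_iff_p_divisible)
    then have "[s = r] (mod p)"
      using p_divisible_of_int_iff[OF assms(1), of "s - r"] by (simp add: cong_iff_dvd_diff)
    then show "s = r" using s r by (auto intro: cong_less_imp_eq_int)
  qed (use r in blast)
  then show ?thesis unfolding rat_residue_def by (rule theI'[THEN conjunct2, THEN conjunct2])
qed

lemma rat_cong_Legendre_rat_residue: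
  assumes "prime p" and "odd p" and "p_integral p x"
  shows "rat_cong (of_int (Legendre (rat_residue p x) p)) (x ^ nat ((p - 1) div 2)) p"
proof -
  have "2 < nat p" using assms(1,2) prime_ge_2_int[OF assms(1)] by (cases "p = 2") auto
  moreover have "nat ((p - 1) div 2) = (nat p - 1) div 2"
    using \<open>2 < nat p\<close> by (simp add: nat_diff_distrib nat_div_distrib)
  ultimately have euler: "[Legendre (rat_residue p x) p = rat_residue p x ^ nat ((p - 1) div 2)] (mod p)"
    using euler_criterion[of "nat p" "rat_residue p x"] assms(1) prime_ge_0_int[OF assms(1)]
    by simp
  have "rat_cong (of_int (Legendre (rat_residue p x) p))
      (of_int (rat_residue p x) ^ nat ((p - 1) div 2)) p"
    using rat_cong_of_int[OF euler] by simp
  moreover have "rat_cong (of_int (rat_residue p x) ^ nat ((p - 1) div 2)) (x ^ nat ((p - 1) div 2)) p"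
    using assms(1,3) by (intro rat_cong_power rat_cong_sym[OF rat_cong_rat_residue])
  ultimately show ?thesis by (rule rat_cong_trans)
qed

lemma central_binomial_Suc:
  "Suc k * ((2 * Suc k) choose Suc k) = 2 * (2 * k + 1) * ((2 * k) choose k)"
proof -
  have "Suc k * ((2 * Suc k) choose Suc k) = 2 * (Suc k * (Suc (2 * k) choose k))"
    using Suc_times_binomial[of k "Suc (2 * k)"] by simp
  also have "Suc (2 * k) choose k = Suc (2 * k) choose Suc k"
    using binomial_symmetric[of k "Suc (2 * k)"] by simp
  also have "Suc k * (Suc (2 * k) choose Suc k) = (2 * k + 1) * ((2 * k) choose k)"
    using Suc_times_binomial_eq[of "2 * k" k] by simp
  finally show ?thesis by simp
qed

lemma of_nat_Suc_times_binomial_Suc: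
  assumes "k \<le> n"
  shows "(of_nat (Suc k) * of_nat (n choose Suc k) :: 'a :: comm_ring_1)
    = (of_nat n - of_nat k) * of_nat (n choose k)"
proof -
  have "Suc k * (n choose Suc k) = (n - k) * (n choose k)"
    using binomial_absorption[of k n] binomial_absorb_comp[of n k] by simp
  then have "(of_nat (Suc k) * of_nat (n choose Suc k) :: 'a) = of_nat (n - k) * of_nat (n choose k)"
    by (simp only: flip: of_nat_mult)
  then show ?thesis using assms by (simp add: of_nat_diff)
qed

text \<open>
  Since \<open>2 (2k + 1) \<equiv> -4 (n - k)\<close>, both sides satisfy the same recurrence in \<open>k\<close>.
\<close>

lemma central_binomial_cong:
  fixes p :: int
  assumes "prime p" and "2 * int n + 1 = p" and "k \<le> n"
  shows "[int ((2 * k) choose k) = (-4) ^ k * int (n choose k)] (mod p)"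
  using assms(3)
proof (induction k)
  case 0
  then show ?case by simp
next
  case (Suc k)
  then have kn: "k < n" by simp
  have central: "int (Suc k) * int ((2 * Suc k) choose Suc k)
      = 2 * (2 * int k + 1) * int ((2 * k) choose k)"
    unfolding of_nat_mult[symmetric] central_binomial_Suc by (simp add: algebra_simps)
  note half = of_nat_Suc_times_binomial_Suc[OF less_imp_le[OF kn], where 'a = int]
  have "[int (Suc k) * int ((2 * Suc k) choose Suc k)
      = 2 * (2 * int k + 1) * ((-4) ^ k * int (n choose k))] (mod p)"
    unfolding central using Suc by (intro cong_mult cong_refl) auto
  also have "2 * (2 * int k + 1) * ((-4) ^ k * int (n choose k))
      = int (Suc k) * ((-4) ^ Suc k * int (n choose Suc k)) + (-4) ^ k * int (n choose k) * (2 * p)"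
  proof -
    have "int (Suc k) * ((-4) ^ Suc k * int (n choose Suc k))
        = - 4 * (-4) ^ k * (int (Suc k) * int (n choose Suc k))"
      by (simp only: power_Suc ac_simps)
    then show ?thesis unfolding half assms(2)[symmetric] by (simp add: algebra_simps)
  qed
  also have "[\<dots> = int (Suc k) * ((-4) ^ Suc k * int (n choose Suc k))] (mod p)"
    by (simp add: cong_iff_dvd_diff)
  finally have "[int (Suc k) * int ((2 * Suc k) choose Suc k)
      = int (Suc k) * ((-4) ^ Suc k * int (n choose Suc k))] (mod p)" .
  moreover have "\<not> p dvd int (Suc k)" using kn assms(2) by (intro zdvd_not_zless) auto
  then have "coprime (int (Suc k)) p"
    using assms(1) by (metis coprime_commute prime_imp_coprime)
  ultimately show ?case by (simp only: cong_mult_lcancel)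
qed

lemma rat_cong_central_binomial_sq:
  fixes p :: int
  assumes "prime p" and "odd p" and "2 * int n + 1 = p" and "k \<le> n"
  shows "rat_cong (of_nat ((2 * k) choose k) ^ 2 / 16 ^ k) (of_nat (n choose k) ^ 2) p"
proof -
  have "((-4 :: int) ^ k) ^ 2 = 16 ^ k"
    by (simp add: power2_eq_square flip: power_mult_distrib)
  then have "[int ((2 * k) choose k) ^ 2 = 16 ^ k * int (n choose k) ^ 2] (mod p)"
    using cong_pow[OF central_binomial_cong[OF assms(1,3,4)], of 2] by (simp add: power_mult_distrib)
  moreover have "coprime ((16 :: int) ^ k) p"
    using coprime_power_left_iff[of 2 "4 * k" p] assms(2)
    by (simp add: coprime_left_2_iff_odd power_mult)
  ultimately show ?thesis
    using rat_cong_of_int_divide[of "int ((2 * k) choose k) ^ 2" "16 ^ k * int (n choose k) ^ 2"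
        p "16 ^ k"]
    by simp
qed

lemma sum_binomial_sq_inverse_powers:
  fixes x :: "'a :: field"
  assumes "x \<noteq> 0"
  shows "(\<Sum>k = 0..n. of_nat (n choose k) ^ 2 * inverse x ^ k)
    = inverse x ^ n * (\<Sum>k = 0..n. of_nat (n choose k) ^ 2 * x ^ k)"
proof -
  have "(\<Sum>k = 0..n. of_nat (n choose k) ^ 2 * inverse x ^ k)
      = (\<Sum>k = 0..n. of_nat (n choose (n + 0 - k)) ^ 2 * inverse x ^ (n + 0 - k))"
    by (rule sum.atLeastAtMost_rev)
  also have "\<dots> = (\<Sum>k = 0..n. inverse x ^ n * (of_nat (n choose k) ^ 2 * x ^ k))"
  proof (rule sum.cong)
    fix k assume "k \<in> {0..n}"
    then have kn: "k \<le> n" by simp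
    have "inverse x ^ n = inverse x ^ (n - k) * inverse x ^ k"
      using kn by (simp flip: power_add)
    then have "inverse x ^ n * x ^ k = inverse x ^ (n - k)"
      using assms by (simp add: power_inverse field_simps)
    then show "of_nat (n choose (n + 0 - k)) ^ 2 * inverse x ^ (n + 0 - k)
        = inverse x ^ n * (of_nat (n choose k) ^ 2 * x ^ k)"
      using binomial_symmetric[OF kn] by (simp add: algebra_simps)
  qed simp
  finally show ?thesis by (simp add: sum_distrib_left)
qed

theorem theorem2p7:
  fixes p :: int and x :: rat
  assumes "prime p" and "odd p"
    and "p_integral p x" and "\<not> rat_cong x 0 p"
  shows "rat_cong
    (\<Sum>k = 0..nat ((p - 1) div 2).
       (of_nat ((2 * k) choose k) ^ 2 / 16 ^ k) *
       (x ^ k - of_int (Legendre (rat_residue p x) p) * inverse x ^ k))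
    0 p"
proof -
  define n where "n = nat ((p - 1) div 2)"
  define L :: rat where "L = of_int (Legendre (rat_residue p x) p)"
  define T where "T = (\<Sum>k = 0..n. of_nat (n choose k) ^ 2 * x ^ k)"
  have pn: "2 * int n + 1 = p"
    unfolding n_def using assms(2) prime_gt_0_int[OF assms(1)] by (auto elim!: oddE)
  have not_div: "\<not> p_divisible p x" using assms(3,4) by (simp add: rat_cong_0_iff)
  then have "x \<noteq> 0" unfolding p_divisible_def by (auto simp: p_integral_0)
  have inv_x: "p_integral p (inverse x)" using p_integral_inverse[OF assms(1,3) not_div] .
  have "rat_cong (\<Sum>k = 0..n. (of_nat ((2 * k) choose k) ^ 2 / 16 ^ k) * (x ^ k - L * inverse x ^ k))
      (\<Sum>k = 0..n. of_nat (n choose k) ^ 2 * (x ^ k - L * inverse x ^ k)) p"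
    using assms(1,2,3) pn inv_x
    by (intro rat_cong_sum rat_cong_mult rat_cong_central_binomial_sq rat_cong_refl)
      (auto simp: L_def intro!: p_integral_diff p_integral_mult p_integral_power p_integral_of_int)
  also have "(\<Sum>k = 0..n. of_nat (n choose k) ^ 2 * (x ^ k - L * inverse x ^ k))
      = T - L * inverse x ^ n * T"
    unfolding T_def right_diff_distrib sum_subtractf mult.left_commute[of _ L]
    by (simp add: sum_distrib_left[symmetric] sum_binomial_sq_inverse_powers[OF \<open>x \<noteq> 0\<close>])
  also have "rat_cong \<dots> (T - x ^ n * inverse x ^ n * T) p"
    using rat_cong_Legendre_rat_residue[OF assms(1-3)] assms(3) inv_x
    unfolding L_def n_def T_def
    by (intro rat_cong_diff rat_cong_mult rat_cong_refl)
      (auto intro!: p_integral_sum p_integral_mult p_integral_power p_integral_of_nat)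
  also have "T - x ^ n * inverse x ^ n * T = 0"
    using \<open>x \<noteq> 0\<close> by (simp flip: power_mult_distrib)
  finally show ?thesis unfolding n_def L_def .
qed

end
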